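(* Let $\mathbb{F}$ be a finite field and $\alpha\in\mathbb{F}$ with $\mathrm{ord}(\alpha)=n$. Let $H\in\mathbb{F}[z]^{(n-1)\times n}$ be the matrix whose entry in row $i$ ($i=1,\ldots,n-1$) and column $j$ ($j=1,\ldots,n$) is $(z-\alpha^{n-j+1})^i$, i.e. \[ H=\begin{pmatrix} z-\alpha^n&z-\alpha^{n-1}&\cdots&z-\alpha\\ (z-\alpha^n)^2&(z-\alpha^{n-1})^2&\cdots&(z-\alpha)^2\\ \vdots&\vdots&&\vdots\\ (z-\alpha^n)^{n-1}&(z-\alpha^{n-1})^{n-1}&\cdots&(z-\alpha)^{n-1} \end{pmatrix}. \] Then (1) $H$ is right invertible, and (2) $GH^{\mathsf T}=0$ where $G=\sum_{\nu=0}^{n-1}z^\nu\begin{pmatrix}1&\alpha^\nu&\alpha^{2\nu}&\ldots&\alpha^{(n-1)\nu}\end{pmatrix}\in\mathbb{F}[z]^{1\times n}$. Consequently, $H$ is a parity check matrix of the convolutional code $\mathcal{C}=\mathrm{im}\,G$, i.e. $\mathcal{C}=\{v\in\mathbb{F}[z]^n\mid vH^{\mathsf T}=0\}$.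
   Context: $\mathrm{ord}(\alpha)$ is the multiplicative order of $\alpha$. A polynomial matrix $M\in\mathbb{F}[z]^{k\times n}$ is right invertible if $M\tilde M=I_k$ for some $\tilde M\in\mathbb{F}[z]^{n\times k}$. For a convolutional code $\mathcal{C}=\mathrm{im}\,G=\{uG\mid u\in\mathbb{F}[z]\}$ with right invertible $G\in\mathbb{F}[z]^{1\times n}$, a parity check matrix is a right invertible $H\in\mathbb{F}[z]^{(n-1)\times n}$ with $\mathcal{C}=\{v\in\mathbb{F}[z]^n\mid vH^{\mathsf T}=0\}$. *)

theory Defs
  imports "HOL-Computational_Algebra.Polynomial" "Jordan_Normal_Form.Matrix"
begin

definition mult_ord :: "'a::field \<Rightarrow> nat" where
  "mult_ord a = (if \<exists>k>0. a ^ k = 1 then (LEAST k. k > 0 \<and> a ^ k = 1) else 0)"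

definition right_invertible :: "'a::comm_ring_1 mat \<Rightarrow> bool" where
  "right_invertible M \<longleftrightarrow> (\<exists>M' \<in> carrier_mat (dim_col M) (dim_row M). M * M' = 1\<^sub>m (dim_row M))"

text \<open>The matrix H: row i (0-based, i < n-1), column j (0-based, j < n) has entry
  (z - alpha^(n-j))^(i+1).\<close>
definition H_mat :: "'a::field \<Rightarrow> nat \<Rightarrow> 'a poly mat" where
  "H_mat \<alpha> n = mat (n - 1) n (\<lambda>(i, j). [:- (\<alpha> ^ (n - j)), 1:] ^ (i + 1))"

definition G_mat :: "'a::field \<Rightarrow> nat \<Rightarrow> 'a poly mat" where
  "G_mat \<alpha> n = mat 1 n (\<lambda>(i, j). \<Sum>\<nu><n. monom (\<alpha> ^ (j * \<nu>)) \<nu>)"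

end

theory Submission
  imports Defs "HOL-Computational_Algebra.Primes" "Jordan_Normal_Form.Determinant"
begin

(* Let V be the n x n matrix with entries (z - alpha^(n-j))^i, i, j < n, so that H is V without
   its first row of ones.  Expanding beta^k = (z - (z - beta))^k binomially and averaging over the
   n-th roots of unity alpha^j yields an explicit polynomial left inverse W of V.  This needs n to be
   invertible in F: if the characteristic p divided n, the Freshman's dream would turn
   alpha^n = 1 into (alpha^(n/p) - 1)^p = 0, contradicting the minimality of n.  Over
   the commutative ring F[z] the left inverse is also a right inverse, and the first column of W is
   G/n.  Hence H times the remaining columns of W is the identity, H annihilates the first column,
   and any row v with v H^T = 0 satisfies v = (v V^T) W^T = (v_1 + ... + v_n) G/n. *)

lemma power_eq_one_iff_mult_ord_dvd:
  fixes \<alpha> :: "'a::field"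
  shows "\<alpha> ^ m = 1 \<longleftrightarrow> mult_ord \<alpha> dvd m"
proof (cases "\<exists>k>0. \<alpha> ^ k = 1")
  case True
  define n where "n = mult_ord \<alpha>"
  have n: "n = (LEAST k. k > 0 \<and> \<alpha> ^ k = 1)"
    using True by (simp add: n_def mult_ord_def)
  have "n > 0" and \<alpha>n: "\<alpha> ^ n = 1"
    using LeastI_ex[OF True] by (simp_all add: n)
  have minimal: "\<alpha> ^ k \<noteq> 1" if "0 < k" "k < n" for k
    using not_less_Least[of k "\<lambda>k. k > 0 \<and> \<alpha> ^ k = 1"] that by (auto simp: n)
  have "\<alpha> ^ m = \<alpha> ^ (n * (m div n) + m mod n)"
    by simp
  also have "\<dots> = \<alpha> ^ (m mod n)"
    by (simp only: power_add power_mult \<alpha>n power_one mult_1)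
  finally have "\<alpha> ^ m = 1 \<longleftrightarrow> m mod n = 0"
    using minimal[of "m mod n"] \<open>n > 0\<close> by fastforce
  then show ?thesis
    by (simp add: n_def dvd_eq_mod_eq_0)
next
  case False
  then have "mult_ord \<alpha> = 0"
    unfolding mult_ord_def by (rule if_not_P)
  moreover have "\<alpha> ^ m = 1 \<longleftrightarrow> m = 0"
    using False by (metis gr0I power_0)
  ultimately show ?thesis
    by simp
qed

lemma power_mult_ord [simp]: "(\<alpha> :: 'a::field) ^ mult_ord \<alpha> = 1"
  by (simp add: power_eq_one_iff_mult_ord_dvd)

lemma of_nat_mult_ord_eq_0_iff:
  fixes \<alpha> :: "'a::field"
  shows "of_nat (mult_ord \<alpha>) = (0::'a) \<longleftrightarrow> mult_ord \<alpha> = 0"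
proof
  assume char_dvd: "of_nat (mult_ord \<alpha>) = (0::'a)"
  show "mult_ord \<alpha> = 0"
  proof (rule ccontr)
    assume "mult_ord \<alpha> \<noteq> 0"
    from char_dvd obtain m where m: "mult_ord \<alpha> = CHAR('a) * m"
      by (auto simp: of_nat_eq_0_iff_char_dvd)
    with \<open>mult_ord \<alpha> \<noteq> 0\<close> have "prime CHAR('a)" and "m > 0"
      by (auto intro: prime_CHAR_semidom)
    then have "m < mult_ord \<alpha>"
      using m prime_gt_1_nat by fastforce
    have "(\<alpha> ^ m) ^ CHAR('a) = (\<alpha> ^ m - 1) ^ CHAR('a) + 1"
      using freshmans_dream[OF \<open>prime CHAR('a)\<close> refl, of "\<alpha> ^ m - 1" 1] by simp
    moreover have "(\<alpha> ^ m) ^ CHAR('a) = \<alpha> ^ mult_ord \<alpha>"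
      by (simp add: m mult.commute flip: power_mult)
    ultimately have "(\<alpha> ^ m - 1) ^ CHAR('a) = 0"
      by simp
    then have "\<alpha> ^ m = 1"
      by simp
    then show False
      using \<open>m > 0\<close> \<open>m < mult_ord \<alpha>\<close> by (auto simp: power_eq_one_iff_mult_ord_dvd dest: nat_dvd_not_less)
  qed
qed simp

lemma sum_powers_mult_ord:
  fixes \<alpha> :: "'a::field"
  shows "(\<Sum>k<mult_ord \<alpha>. (\<alpha> ^ m) ^ k) = (if mult_ord \<alpha> dvd m then of_nat (mult_ord \<alpha>) else 0)"
proof (cases "mult_ord \<alpha> dvd m")
  case True
  then show ?thesis
    by (simp add: power_eq_one_iff_mult_ord_dvd[symmetric])
next
  case False
  have "(\<alpha> ^ m) ^ mult_ord \<alpha> = 1"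
    by (simp add: power_eq_one_iff_mult_ord_dvd flip: power_mult)
  then have "(1 - \<alpha> ^ m) * (\<Sum>k<mult_ord \<alpha>. (\<alpha> ^ m) ^ k) = 0"
    using one_diff_power_eq[of "\<alpha> ^ m" "mult_ord \<alpha>"] by simp
  then show ?thesis
    using False by (simp add: power_eq_one_iff_mult_ord_dvd[symmetric])
qed

lemma dvd_add_diff_iff_eq:
  fixes j l n :: nat
  assumes "j < n" "l < n"
  shows "n dvd j + (n - l) \<longleftrightarrow> j = l"
proof (cases "l \<le> j")
  case True
  then have "j + (n - l) = (j - l) + 1 * n"
    using assms by simp
  then have "n dvd j + (n - l) \<longleftrightarrow> n dvd j - l"
    by (simp only: dvd_add_times_triv_right_iff)
  then show ?thesis
    using True assms nat_dvd_not_less[of "j - l" n] by (cases "l < j") auto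
next
  case False
  then show ?thesis
    using assms nat_dvd_not_less[of "j + (n - l)" n] by auto
qed

lemma sum_linear_powers_eq_const_power:
  fixes \<beta> :: "'a::comm_ring_1"
  assumes "k < n"
  shows "(\<Sum>i<n. monom ((-1) ^ i * of_nat (k choose i)) (k - i) * [:-\<beta>, 1:] ^ i) = [:\<beta> ^ k:]"
proof -
  let ?p = "[:-\<beta>, 1:]"
  have binomial_term: "monom ((-1) ^ i * of_nat (k choose i)) (k - i) * ?p ^ i
      = of_nat (k choose i) * (- ?p) ^ i * [:0, 1:] ^ (k - i)" for i
  proof -
    have sign: "(-1) ^ i * q = Polynomial.smult ((-1) ^ i) q" for q :: "'a poly"
      by (cases "even i") auto
    have "monom ((-1) ^ i * of_nat (k choose i)) (k - i) * ?p ^ i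
        = of_nat (k choose i) * ((-1) ^ i * ?p ^ i) * [:0, 1:] ^ (k - i)"
      by (simp add: monom_altdef of_nat_poly mult_ac sign)
    then show ?thesis
      by (simp only: power_minus[of ?p i])
  qed
  have "(\<Sum>i<n. monom ((-1) ^ i * of_nat (k choose i)) (k - i) * ?p ^ i)
      = (\<Sum>i\<le>k. monom ((-1) ^ i * of_nat (k choose i)) (k - i) * ?p ^ i)"
    using assms by (intro sum.mono_neutral_right) (auto simp: binomial_eq_0)
  also have "\<dots> = (\<Sum>i\<le>k. of_nat (k choose i) * (- ?p) ^ i * [:0, 1:] ^ (k - i))"
    by (rule sum.cong[OF refl binomial_term])
  also have "\<dots> = (- ?p + [:0, 1:]) ^ k"
    by (rule binomial_ring[symmetric])
  also have "\<dots> = [:\<beta> ^ k:]"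
    by (simp add: poly_const_pow)
  finally show ?thesis .
qed

(* The library's mat_mult_left_right_inverse is stated for fields only. *)
lemma mat_mult_left_right_inverse_comm_ring:
  fixes A B :: "'a::comm_ring_1 mat"
  assumes A: "A \<in> carrier_mat n n" and B: "B \<in> carrier_mat n n" and BA: "B * A = 1\<^sub>m n"
  shows "A * B = 1\<^sub>m n"
proof -
  define R where "R = det B \<cdot>\<^sub>m adj_mat A"
  have R: "R \<in> carrier_mat n n"
    using adj_mat(1)[OF A] by (simp add: R_def)
  have "det B * det A = 1"
    using det_mult[OF B A] BA by simp
  then have AR: "A * R = 1\<^sub>m n"
    unfolding R_def using mult_smult_distrib[OF A adj_mat(1)[OF A]] adj_mat(2)[OF A]
    by (auto intro!: eq_matI simp: mult.commute)
  have "B = (B * A) * R"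
    using AR A B R by simp
  also have "\<dots> = R"
    using BA R by simp
  finally show ?thesis
    using AR by simp
qed

definition drop_first_row :: "'a mat \<Rightarrow> 'a mat" where
  "drop_first_row A = mat (dim_row A - 1) (dim_col A) (\<lambda>(i, j). A $$ (Suc i, j))"

lemma drop_first_row_dim [simp]:
  "dim_row (drop_first_row A) = dim_row A - 1"
  "dim_col (drop_first_row A) = dim_col A"
  by (simp_all add: drop_first_row_def)

lemma row_drop_first_row [simp]:
  "i < dim_row A - 1 \<Longrightarrow> row (drop_first_row A) i = row A (Suc i)"
  by (auto simp: drop_first_row_def)

lemma right_invertible_drop_first_row:
  fixes A B :: "'a::comm_ring_1 mat"
  assumes A: "A \<in> carrier_mat n n" and B: "B \<in> carrier_mat n n" and AB: "A * B = 1\<^sub>m n"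
  shows "right_invertible (drop_first_row A)"
  unfolding right_invertible_def
proof
  let ?B' = "mat n (n - 1) (\<lambda>(j, i). B $$ (j, Suc i))"
  show "drop_first_row A * ?B' = 1\<^sub>m (dim_row (drop_first_row A))"
  proof (rule eq_matI)
    fix i l
    assume "i < dim_row (1\<^sub>m (dim_row (drop_first_row A)) :: 'a mat)"
      and "l < dim_col (1\<^sub>m (dim_row (drop_first_row A)) :: 'a mat)"
    then have i: "i < n - 1" and l: "l < n - 1"
      using A by auto
    have "col ?B' l = col B (Suc l)"
      using B l by (auto intro!: eq_vecI)
    then have "(drop_first_row A * ?B') $$ (i, l) = row A (Suc i) \<bullet> col B (Suc l)"
      using A i l by simp
    also have "\<dots> = (A * B) $$ (Suc i, Suc l)"
      using A B i l by simp
    finally show "(drop_first_row A * ?B') $$ (i, l) = 1\<^sub>m (dim_row (drop_first_row A)) $$ (i, l)"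
      using A AB i l by simp
  qed (use A in auto)
qed (use A in auto)

lemma first_col_inverse_orthogonal_drop_first_row:
  fixes A B :: "'a::comm_ring_1 mat"
  assumes A: "A \<in> carrier_mat n n" and B: "B \<in> carrier_mat n n" and AB: "A * B = 1\<^sub>m n"
  shows "mat_of_row (col B 0) * transpose_mat (drop_first_row A) = 0\<^sub>m 1 (n - 1)"
proof (rule eq_matI)
  fix a i
  assume "a < dim_row (0\<^sub>m 1 (n - 1) :: 'a mat)" "i < dim_col (0\<^sub>m 1 (n - 1) :: 'a mat)"
  then have "a = 0" "i < n - 1"
    by auto
  moreover have "col B 0 \<bullet> row A (Suc i) = (A * B) $$ (Suc i, 0)"
    using A B \<open>i < n - 1\<close> comm_scalar_prod[of "col B 0" n "row A (Suc i)"]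
    by (simp add: carrier_dim_vec)
  ultimately show "(mat_of_row (col B 0) * transpose_mat (drop_first_row A)) $$ (a, i) = 0\<^sub>m 1 (n - 1) $$ (a, i)"
    using A B AB by simp
qed (use A B in auto)

lemma left_kernel_drop_first_row:
  fixes A B :: "'a::comm_ring_1 mat"
  assumes A: "A \<in> carrier_mat n n" and B: "B \<in> carrier_mat n n"
    and AB: "A * B = 1\<^sub>m n" and BA: "B * A = 1\<^sub>m n"
  shows "{v \<in> carrier_mat 1 n. v * transpose_mat (drop_first_row A) = 0\<^sub>m 1 (n - 1)}
    = {u \<cdot>\<^sub>m mat_of_row (col B 0) | u. True}"
proof (intro equalityI subsetI CollectI conjI)
  fix v
  assume "v \<in> {v \<in> carrier_mat 1 n. v * transpose_mat (drop_first_row A) = 0\<^sub>m 1 (n - 1)}"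
  then have v: "v \<in> carrier_mat 1 n" and vH: "v * transpose_mat (drop_first_row A) = 0\<^sub>m 1 (n - 1)"
    by auto
  define s where "s = row v 0 \<bullet> row A 0"
  define e :: "'a mat" where "e = mat_of_row (unit_vec n 0)"
  have e: "e \<in> carrier_mat 1 n"
    by (simp add: e_def mat_of_row_def)
  have vAT: "v * transpose_mat A = s \<cdot>\<^sub>m e"
  proof (rule eq_matI)
    fix a i
    assume "a < dim_row (s \<cdot>\<^sub>m e)" "i < dim_col (s \<cdot>\<^sub>m e)"
    then have a: "a = 0" and i: "i < n"
      using e by auto
    have "(v * transpose_mat A) $$ (a, i) = row v 0 \<bullet> row A i"
      using A v a i by simp
    also have "\<dots> = (s \<cdot>\<^sub>m e) $$ (a, i)"
    proof (cases i)
      case 0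
      then show ?thesis
        using a i by (simp add: s_def e_def)
    next
      case (Suc i')
      have "row v 0 \<bullet> row A (Suc i') = (v * transpose_mat (drop_first_row A)) $$ (0, i')"
        using A v i Suc by simp
      also have "\<dots> = 0"
        using vH i Suc by simp
      finally show ?thesis
        using a i Suc by (simp add: e_def)
    qed
    finally show "(v * transpose_mat A) $$ (a, i) = (s \<cdot>\<^sub>m e) $$ (a, i)" .
  qed (use A v e in auto)
  have "v = v * transpose_mat (B * A)"
    using v BA by simp
  also have "\<dots> = (v * transpose_mat A) * transpose_mat B"
    using A B v by (simp add: transpose_mult[OF B A])
  also have "\<dots> = s \<cdot>\<^sub>m (e * transpose_mat B)"
    unfolding vAT using e B by (intro mult_smult_assoc_mat) auto
  also have "e * transpose_mat B = mat_of_row (col B 0)"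
    using B by (auto intro!: eq_matI simp: e_def)
  finally show "\<exists>u. v = u \<cdot>\<^sub>m mat_of_row (col B 0) \<and> True"
    by blast
next
  fix v
  assume "v \<in> {u \<cdot>\<^sub>m mat_of_row (col B 0) | u. True}"
  then obtain u where v: "v = u \<cdot>\<^sub>m mat_of_row (col B 0)"
    by blast
  then show "v \<in> carrier_mat 1 n"
    using B by auto
  have "mat_of_row (col B 0) \<in> carrier_mat 1 n"
    using B by (simp add: mat_of_row_def)
  moreover have "drop_first_row A \<in> carrier_mat (n - 1) n"
    using A by (intro carrier_matI) auto
  then have "transpose_mat (drop_first_row A) \<in> carrier_mat n (n - 1)"
    by (rule transpose_carrier_mat[THEN iffD2])
  ultimately have "v * transpose_mat (drop_first_row A)
      = u \<cdot>\<^sub>m (mat_of_row (col B 0) * transpose_mat (drop_first_row A))"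
    unfolding v by (rule mult_smult_assoc_mat)
  also have "\<dots> = 0\<^sub>m 1 (n - 1)"
    by (simp add: first_col_inverse_orthogonal_drop_first_row[OF A B AB])
  finally show "v * transpose_mat (drop_first_row A) = 0\<^sub>m 1 (n - 1)" .
qed

lemma range_smult_mat_eqI:
  fixes M N :: "'a::comm_semiring_1 mat"
  assumes "M = c \<cdot>\<^sub>m N" and "N = d \<cdot>\<^sub>m M"
  shows "{u \<cdot>\<^sub>m M | u. True} = {u \<cdot>\<^sub>m N | u. True}"
proof -
  have smult_smult: "a \<cdot>\<^sub>m (b \<cdot>\<^sub>m K) = (a * b) \<cdot>\<^sub>m K" for a b and K :: "'a mat"
    by (auto intro!: eq_matI simp: mult.assoc)
  have "u \<cdot>\<^sub>m M = (u * c) \<cdot>\<^sub>m N" for u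
    by (simp add: assms(1) smult_smult)
  moreover have "u \<cdot>\<^sub>m N = (u * d) \<cdot>\<^sub>m M" for u
    by (simp add: assms(2) smult_smult)
  ultimately show ?thesis
    by blast
qed

lemma smult_sum_right: "Polynomial.smult c (sum f A) = (\<Sum>x\<in>A. Polynomial.smult c (f x))"
  by (induct A rule: infinite_finite_induct) (auto simp: smult_add_right)

definition V_mat :: "'a::field \<Rightarrow> nat \<Rightarrow> 'a poly mat" where
  "V_mat \<alpha> n = mat n n (\<lambda>(i, j). [:- (\<alpha> ^ (n - j)), 1:] ^ i)"

(* W V has entries (1/n) sum_k alpha^(j k) beta_l^k with beta_l = alpha^(n-l) = alpha^(-l), by
   sum_linear_powers_eq_const_power; this is the discrete Fourier inversion formula. *)
definition V_inv_mat :: "'a::field \<Rightarrow> nat \<Rightarrow> 'a poly mat" where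
  "V_inv_mat \<alpha> n = mat n n (\<lambda>(j, i). Polynomial.smult (inverse (of_nat n))
     (\<Sum>k<n. Polynomial.smult (\<alpha> ^ (j * k)) (monom ((-1) ^ i * of_nat (k choose i)) (k - i))))"

lemma V_mat_carrier [simp]: "V_mat \<alpha> n \<in> carrier_mat n n"
  by (simp add: V_mat_def)

lemma V_inv_mat_carrier [simp]: "V_inv_mat \<alpha> n \<in> carrier_mat n n"
  by (simp add: V_inv_mat_def)

lemma H_mat_eq_drop_first_row: "H_mat \<alpha> n = drop_first_row (V_mat \<alpha> n)"
  by (rule eq_matI) (auto simp: H_mat_def V_mat_def drop_first_row_def)

lemma V_inv_mat_mult_V_mat:
  fixes \<alpha> :: "'a::field"
  assumes n: "mult_ord \<alpha> = n"
  shows "V_inv_mat \<alpha> n * V_mat \<alpha> n = 1\<^sub>m n"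
proof (rule eq_matI)
  fix j l
  assume "j < dim_row (1\<^sub>m n :: 'a poly mat)" and "l < dim_col (1\<^sub>m n :: 'a poly mat)"
  then have j: "j < n" and l: "l < n"
    by auto
  let ?c = "\<lambda>k i. monom ((-1) ^ i * of_nat (k choose i)) (k - i)"
  let ?p = "[:- (\<alpha> ^ (n - l)), 1:]"
  have "(V_inv_mat \<alpha> n * V_mat \<alpha> n) $$ (j, l) = (\<Sum>i<n. V_inv_mat \<alpha> n $$ (j, i) * ?p ^ i)"
    using j l by (simp add: V_inv_mat_def V_mat_def scalar_prod_def atLeast0LessThan)
  also have "\<dots> = Polynomial.smult (inverse (of_nat n))
      (\<Sum>k<n. Polynomial.smult (\<alpha> ^ (j * k)) (\<Sum>i<n. ?c k i * ?p ^ i))"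
    using j by (simp add: V_inv_mat_def sum_distrib_right smult_sum_right) (rule sum.swap)
  also have "\<dots> = Polynomial.smult (inverse (of_nat n)) (\<Sum>k<n. [:(\<alpha> ^ (j + (n - l))) ^ k:])"
  proof -
    have "Polynomial.smult (\<alpha> ^ (j * k)) (\<Sum>i<n. ?c k i * ?p ^ i) = [:(\<alpha> ^ (j + (n - l))) ^ k:]"
      if "k < n" for k
      using that by (simp add: sum_linear_powers_eq_const_power power_add power_mult_distrib power_mult)
    then show ?thesis
      by simp
  qed
  also have "\<dots> = [:inverse (of_nat n) * (if j = l then of_nat n else 0):]"
    using sum_powers_mult_ord[of \<alpha> "j + (n - l)"] dvd_add_diff_iff_eq[OF j l]
    by (simp add: n sum_to_poly)
  also have "\<dots> = 1\<^sub>m n $$ (j, l)"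
    using j l of_nat_mult_ord_eq_0_iff[of \<alpha>] by (simp add: n)
  finally show "(V_inv_mat \<alpha> n * V_mat \<alpha> n) $$ (j, l) = 1\<^sub>m n $$ (j, l)" .
qed (simp_all add: V_inv_mat_def V_mat_def)

lemma mat_of_row_col_V_inv_mat:
  "mat_of_row (col (V_inv_mat \<alpha> n) 0) = [:inverse (of_nat n):] \<cdot>\<^sub>m G_mat \<alpha> n"
  by (rule eq_matI) (auto simp: V_inv_mat_def G_mat_def smult_monom)

lemma G_mat_eq_smult_col_V_inv_mat:
  fixes \<alpha> :: "'a::field"
  assumes n: "mult_ord \<alpha> = n"
  shows "G_mat \<alpha> n = [:of_nat n:] \<cdot>\<^sub>m mat_of_row (col (V_inv_mat \<alpha> n) 0)"
proof (rule eq_matI)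
  fix i j
  assume "i < dim_row ([:of_nat n:] \<cdot>\<^sub>m mat_of_row (col (V_inv_mat \<alpha> n) 0))"
    and "j < dim_col ([:of_nat n:] \<cdot>\<^sub>m mat_of_row (col (V_inv_mat \<alpha> n) 0))"
  then have "i = 0" "j < n"
    by (simp_all add: V_inv_mat_def)
  moreover from \<open>j < n\<close> have "of_nat n \<noteq> (0::'a)"
    using of_nat_mult_ord_eq_0_iff[of \<alpha>] by (simp add: n)
  ultimately show "G_mat \<alpha> n $$ (i, j) = ([:of_nat n:] \<cdot>\<^sub>m mat_of_row (col (V_inv_mat \<alpha> n) 0)) $$ (i, j)"
    by (simp add: mat_of_row_col_V_inv_mat G_mat_def)
qed (simp_all add: V_inv_mat_def G_mat_def)

theorem theorem3p1:
  fixes \<alpha> :: "'a::{field,finite}" and n :: nat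
  assumes "mult_ord \<alpha> = n"
  shows "right_invertible (H_mat \<alpha> n) \<and>
         G_mat \<alpha> n * transpose_mat (H_mat \<alpha> n) = 0\<^sub>m 1 (n - 1) \<and>
         {u \<cdot>\<^sub>m G_mat \<alpha> n | u. True} =
         {v \<in> carrier_mat 1 n. v * transpose_mat (H_mat \<alpha> n) = 0\<^sub>m 1 (n - 1)}"
proof -
  let ?V = "V_mat \<alpha> n" and ?W = "V_inv_mat \<alpha> n"
  have WV: "?W * ?V = 1\<^sub>m n"
    using assms by (rule V_inv_mat_mult_V_mat)
  have VW: "?V * ?W = 1\<^sub>m n"
    using V_mat_carrier V_inv_mat_carrier WV by (rule mat_mult_left_right_inverse_comm_ring)
  have "{u \<cdot>\<^sub>m G_mat \<alpha> n | u. True} = {u \<cdot>\<^sub>m mat_of_row (col ?W 0) | u. True}"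
    using G_mat_eq_smult_col_V_inv_mat[OF assms] mat_of_row_col_V_inv_mat
    by (rule range_smult_mat_eqI)
  also have "\<dots> = {v \<in> carrier_mat 1 n. v * transpose_mat (drop_first_row ?V) = 0\<^sub>m 1 (n - 1)}"
    using V_mat_carrier V_inv_mat_carrier VW WV by (rule left_kernel_drop_first_row[symmetric])
  finally have code: "{u \<cdot>\<^sub>m G_mat \<alpha> n | u. True} =
      {v \<in> carrier_mat 1 n. v * transpose_mat (H_mat \<alpha> n) = 0\<^sub>m 1 (n - 1)}"
    by (simp only: H_mat_eq_drop_first_row)
  have "G_mat \<alpha> n = 1 \<cdot>\<^sub>m G_mat \<alpha> n"
    by (auto intro!: eq_matI)
  then have "G_mat \<alpha> n \<in> {u \<cdot>\<^sub>m G_mat \<alpha> n | u. True}"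
    by blast
  then have "G_mat \<alpha> n * transpose_mat (H_mat \<alpha> n) = 0\<^sub>m 1 (n - 1)"
    unfolding code by blast
  moreover have "right_invertible (H_mat \<alpha> n)"
    unfolding H_mat_eq_drop_first_row
    using V_mat_carrier V_inv_mat_carrier VW by (rule right_invertible_drop_first_row)
  ultimately show ?thesis
    using code by blast
qed

end
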